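(* Let $m\ge1$, $\epsilon\in\{1,-1\}$, and let $M,M'\subset\mathbb{C}^2$ be (formal or real-analytic) hypersurfaces each given by an equation of the form $v=\frac12u^m\bigl(\epsilon|z|^2+\sum_{k,l\ge2}h_{kl}(u)z^k\bar z^l\bigr)$, $w=u+iv$ (with the same $m$ and $\epsilon$). Let $H(z,w)=(F(z,w),G(z,w))$ be a formal transformation with $H(0)=0$ and invertible Jacobian $H'(0)$ which maps $M$ into $M'$. Then there are $\lambda\in\mathbb{C}\setminus\{0\}$ and $\mu\in\mathbb{R}$ with $F_z(0,0)=\lambda$, $G_w(0,0)=\mu$, $\mu^{1-m}=|\lambda|^2$, and moreover $G=O(w)$ and $G_z=O(w^{m+1})$. In addition, $\frac{\partial^\ell G}{\partial w^\ell}(0,0)\in\mathbb{R}$ for all $\ell\le m$.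
   Context: $O(w^k)$ means divisibility of the formal power series by $w^k$. *)

theory Defs
  imports Complex_Main
begin

text \<open>Formal power series in two variables (z,w): coefficient of z^i w^j is f i j.
  Formal power series in three variables (z, chi = conj z, u): coefficient of
  z^a chi^b u^c is A a b c.\<close>

type_synonym ser2 = "nat \<Rightarrow> nat \<Rightarrow> complex"
type_synonym ser3 = "nat \<Rightarrow> nat \<Rightarrow> nat \<Rightarrow> complex"

definition mul3 :: "ser3 \<Rightarrow> ser3 \<Rightarrow> ser3" where
  "mul3 A B = (\<lambda>a b c. \<Sum>i\<le>a. \<Sum>j\<le>b. \<Sum>k\<le>c. A i j k * B (a-i) (b-j) (c-k))"

definition one3 :: ser3 where
  "one3 = (\<lambda>a b c. if a = 0 \<and> b = 0 \<and> c = 0 then 1 else 0)"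

definition zero3 :: ser3 where
  "zero3 = (\<lambda>a b c. 0)"

fun pow3 :: "ser3 \<Rightarrow> nat \<Rightarrow> ser3" where
  "pow3 A 0 = one3"
| "pow3 A (Suc n) = mul3 A (pow3 A n)"

text \<open>Substitution P(A,B,C) of three series without constant term into a
  three-variable series; only monomials of total degree \<le> a+b+c contribute to
  the coefficient at (a,b,c).\<close>
definition subst3 :: "ser3 \<Rightarrow> ser3 \<Rightarrow> ser3 \<Rightarrow> ser3 \<Rightarrow> ser3" where
  "subst3 P A B C = (\<lambda>a b c.
     \<Sum>i\<le>a+b+c. \<Sum>j\<le>a+b+c-i. \<Sum>k\<le>a+b+c-i-j.
       P i j k * mul3 (pow3 A i) (mul3 (pow3 B j) (pow3 C k)) a b c)"

definition varZ :: ser3 where "varZ = (\<lambda>a b c. if a = 1 \<and> b = 0 \<and> c = 0 then 1 else 0)"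
definition varX :: ser3 where "varX = (\<lambda>a b c. if a = 0 \<and> b = 1 \<and> c = 0 then 1 else 0)"
definition varU :: ser3 where "varU = (\<lambda>a b c. if a = 0 \<and> b = 0 \<and> c = 1 then 1 else 0)"

definition lift2 :: "ser2 \<Rightarrow> ser3" where
  "lift2 f = (\<lambda>i j k. if k = 0 then f i j else 0)"

text \<open>Conjugating the coefficients : conj(f(z,w)) = (cnj2 f)(conj z, conj w).\<close>
definition cnj2 :: "ser2 \<Rightarrow> ser2" where
  "cnj2 f = (\<lambda>i j. cnj (f i j))"

text \<open>Defining function of the hypersurface
  v = 1/2 u^m (eps |z|^2 + sum_{k,l>=2} h_kl(u) z^k conj(z)^l),
  where h k l j is the coefficient of u^j in h_kl(u).\<close>
definition hyp_phi :: "nat \<Rightarrow> real \<Rightarrow> (nat \<Rightarrow> nat \<Rightarrow> nat \<Rightarrow> complex) \<Rightarrow> ser3" where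
  "hyp_phi m eps h = (\<lambda>a b c.
      (if a = 1 \<and> b = 1 \<and> c = m then complex_of_real eps / 2 else 0)
    + (if 2 \<le> a \<and> 2 \<le> b \<and> m \<le> c then h a b (c - m) / 2 else 0))"

definition real_hyp_data :: "(nat \<Rightarrow> nat \<Rightarrow> nat \<Rightarrow> complex) \<Rightarrow> bool" where
  "real_hyp_data h \<longleftrightarrow> (\<forall>k l j. 2 \<le> k \<longrightarrow> 2 \<le> l \<longrightarrow> cnj (h k l j) = h l k j)"

text \<open>H = (F,G) maps M = {v = phi(z,conj z,u)} into M' = {v = phi'(z,conj z,u)}
  formally: after substituting the parametrization w = u + i phi(z,chi,u) of M
  (and conj w = u - i phi), the identity Im G = phi'(F, conj F, Re G) holds as
  an identity of formal power series in (z, chi, u).\<close>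
definition maps_into :: "ser3 \<Rightarrow> ser3 \<Rightarrow> ser2 \<Rightarrow> ser2 \<Rightarrow> bool" where
  "maps_into phi phi' F G \<longleftrightarrow>
    (let W  = (\<lambda>a b c. varU a b c + \<i> * phi a b c);
         Wb = (\<lambda>a b c. varU a b c - \<i> * phi a b c);
         Fz = subst3 (lift2 F) varZ W zero3;
         Fb = subst3 (lift2 (cnj2 F)) varX Wb zero3;
         Gz = subst3 (lift2 G) varZ W zero3;
         Gb = subst3 (lift2 (cnj2 G)) varX Wb zero3
     in \<forall>a b c. Gz a b c - Gb a b c
          = 2 * \<i> * subst3 phi' Fz Fb (\<lambda>a b c. (Gz a b c + Gb a b c) / 2) a b c)"

definition dz2 :: "ser2 \<Rightarrow> ser2" where
  "dz2 f = (\<lambda>i j. of_nat (Suc i) * f (Suc i) j)"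
definition dw2 :: "ser2 \<Rightarrow> ser2" where
  "dw2 f = (\<lambda>i j. of_nat (Suc j) * f i (Suc j))"

definition O_w :: "nat \<Rightarrow> ser2 \<Rightarrow> bool" where
  "O_w k f \<longleftrightarrow> (\<forall>i j. j < k \<longrightarrow> f i j = 0)"

end

theory Submission
  imports Defs
begin

text \<open>On \<open>M\<close> we have \<open>w = u + i \<phi>(z, \<chi>, u)\<close> with \<open>\<chi> = conj z\<close>, where
  \<open>\<phi> \<equiv> \<epsilon>/2 z \<chi> u\<^sup>m\<close> modulo \<open>z\<^sup>2\<chi>, z\<chi>\<^sup>2\<close> and \<open>\<phi> = O(u)\<close>, while every monomial of \<open>\<phi>'\<close> contains \<open>\<chi> u\<^sup>m\<close>.
  At \<open>\<chi> = 0\<close> the mapping identity \<open>G - conj G = 2i \<phi>'(F, conj F, Re G)\<close> on \<open>M\<close> therefore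
  reduces to \<open>G(z,u) = conj G(0,u) + O(u)\<close>. This gives \<open>G(z,0) = 0\<close>, hence \<open>Re G = O(u)\<close> on \<open>M\<close>,
  and then the same reduction holds modulo \<open>u\<^sup>m\<^sup>+\<^sup>1\<close>: so \<open>G = O(w)\<close>, \<open>G\<^sub>z = O(w\<^sup>m\<^sup>+\<^sup>1)\<close>, and the
  Taylor coefficients of \<open>G(0,w)\<close> up to order \<open>m\<close> are real. In the coefficients of \<open>z \<chi> u\<^sup>m\<close>
  only the linear terms \<open>\<lambda> z\<close>, \<open>conj \<lambda> \<chi>\<close>, \<open>\<mu> u\<close> of \<open>F\<close>, \<open>conj F\<close>, \<open>Re G\<close> on \<open>M\<close> contribute, giving
  \<open>\<epsilon> \<mu> = \<epsilon> |\<lambda>|\<^sup>2 \<mu>\<^sup>m\<close>; finally \<open>\<lambda>, \<mu> \<noteq> 0\<close> since \<open>H'(0)\<close> is invertible and \<open>G\<^sub>z(0) = 0\<close>.\<close>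

section \<open>Coefficient calculus of series in \<open>z, \<chi>, u\<close>\<close>

lemma sum_atMost_single:
  assumes "kk \<le> c" "\<And>k. k \<le> c \<Longrightarrow> k \<noteq> kk \<Longrightarrow> f k = 0"
  shows "(\<Sum>k\<le>(c::nat). f k) = (f kk :: 'a::comm_monoid_add)"
  using assms by (subst sum.mono_neutral_right[of "{..c}" "{kk}"]) auto

lemma sum_atMost_delta2:
  "(\<Sum>i\<le>(a::nat). \<Sum>j\<le>(b::nat). if i = p \<and> j = q then X i j else (0::'a::comm_monoid_add))
   = (if p \<le> a \<and> q \<le> b then X p q else 0)"
proof -
  have "(\<Sum>j\<le>b. if i = p \<and> j = q then X i j else (0::'a))
     = (if i = p then (if q \<le> b then X i q else 0) else 0)" for i
    by (cases "i = p") auto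
  then show ?thesis by simp
qed

lemma sum_atMost_delta3:
  "(\<Sum>i\<le>(a::nat). \<Sum>j\<le>(b::nat). \<Sum>k\<le>(c::nat).
      if i = p \<and> j = q \<and> k = r then X i j k else (0::'a::comm_monoid_add))
   = (if p \<le> a \<and> q \<le> b \<and> r \<le> c then X p q r else 0)"
proof -
  have "(\<Sum>k\<le>c. if i = p \<and> j = q \<and> k = r then X i j k else (0::'a))
     = (if i = p \<and> j = q then (if r \<le> c then X i j r else 0) else 0)" for i j
    by (cases "i = p \<and> j = q") auto
  then show ?thesis by (simp add: sum_atMost_delta2)
qed

lemma sum_simplex_delta2:
  "(\<Sum>i\<le>(N::nat). \<Sum>j\<le>N-i. if i = p \<and> j = q then X else (0::'a::comm_monoid_add))
   = (if p + q \<le> N then X else 0)"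
proof -
  have "(\<Sum>j\<le>N-i. if i = p \<and> j = q then X else (0::'a))
     = (if i = p then (if q \<le> N - p then X else 0) else 0)" for i
    by (cases "i = p") auto
  then show ?thesis by auto
qed

lemma sum_simplex_delta3:
  "(\<Sum>i\<le>(N::nat). \<Sum>j\<le>N-i. \<Sum>k\<le>N-i-j.
      if i = p \<and> j = q \<and> k = r then X else (0::'a::comm_monoid_add))
   = (if p + q + r \<le> N then X else 0)"
proof -
  have "(\<Sum>k\<le>N-i-j. if i = p \<and> j = q \<and> k = r then X else (0::'a))
     = (if i = p \<and> j = q then (if r \<le> N - p - q then X else 0) else 0)" for i j
    by (cases "i = p \<and> j = q") auto
  then show ?thesis by (simp add: sum_simplex_delta2) arith
qed

definition mono3 :: "nat \<Rightarrow> nat \<Rightarrow> nat \<Rightarrow> ser3" where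
  "mono3 p q r = (\<lambda>a b c. if a = p \<and> b = q \<and> c = r then 1 else 0)"

lemma one3_eq_mono3: "one3 = mono3 0 0 0"
  unfolding one3_def mono3_def by auto

lemma varZ_eq_mono3: "varZ = mono3 1 0 0"
  unfolding varZ_def mono3_def by auto

lemma mul3_mono3_left:
  "mul3 (mono3 p q r) B a b c = (if p \<le> a \<and> q \<le> b \<and> r \<le> c then B (a-p) (b-q) (c-r) else 0)"
proof -
  have "mul3 (mono3 p q r) B a b c =
      (\<Sum>i\<le>a. \<Sum>j\<le>b. \<Sum>k\<le>c. if i = p \<and> j = q \<and> k = r then B (a-i) (b-j) (c-k) else 0)"
    unfolding mul3_def mono3_def by (intro sum.cong refl) auto
  then show ?thesis by (simp only: sum_atMost_delta3)
qed

lemma mul3_one3_right: "mul3 A one3 = A"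
proof (intro ext)
  fix a b c
  have "mul3 A one3 a b c =
      (\<Sum>i\<le>a. \<Sum>j\<le>b. \<Sum>k\<le>c. if i = a \<and> j = b \<and> k = c then A i j k else 0)"
    unfolding mul3_def one3_def by (intro sum.cong refl) auto
  then show "mul3 A one3 a b c = A a b c" by (simp only: sum_atMost_delta3) simp
qed

lemma pow3_varZ: "pow3 varZ i = mono3 i 0 0"
proof (induction i)
  case 0
  then show ?case by (simp add: one3_eq_mono3)
next
  case (Suc i)
  then show ?case
    by (auto simp: varZ_eq_mono3 mul3_mono3_left intro!: ext) (auto simp: mono3_def)
qed

definition swap3 :: "ser3 \<Rightarrow> ser3" where
  "swap3 A = (\<lambda>a b c. A b a c)"

lemma swap3_swap3: "swap3 (swap3 A) = A"
  unfolding swap3_def by simp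

lemma swap3_mul3: "swap3 (mul3 A B) = mul3 (swap3 A) (swap3 B)"
  unfolding mul3_def swap3_def by (intro ext) (rule sum.swap)

lemma swap3_one3: "swap3 one3 = one3"
  unfolding swap3_def one3_def by (intro ext) auto

lemma swap3_pow3: "swap3 (pow3 A n) = pow3 (swap3 A) n"
  by (induction n) (simp_all add: swap3_one3 swap3_mul3)

lemma swap3_varZ: "swap3 varZ = varX"
  unfolding swap3_def varZ_def varX_def by (intro ext) auto

lemma subst3_lift2:
  "subst3 (lift2 f) A B zero3 a b c =
    (\<Sum>i\<le>a+b+c. \<Sum>j\<le>a+b+c-i. f i j * mul3 (pow3 A i) (pow3 B j) a b c)"
  unfolding subst3_def
proof (intro sum.cong refl)
  fix i j
  show "(\<Sum>k\<le>a+b+c-i-j. lift2 f i j k * mul3 (pow3 A i) (mul3 (pow3 B j) (pow3 zero3 k)) a b c)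
     = f i j * mul3 (pow3 A i) (pow3 B j) a b c"
    by (subst sum_atMost_single[where kk = 0]) (auto simp: lift2_def mul3_one3_right)
qed

lemma mul3_pow3_varZ_left: "mul3 (pow3 varZ i) B a b c = (if i \<le> a then B (a-i) b c else 0)"
  by (simp add: pow3_varZ mul3_mono3_left)

lemma subst3_lift2_varZ:
  "subst3 (lift2 f) varZ W zero3 a b c =
    (\<Sum>i\<le>a+b+c. \<Sum>j\<le>a+b+c-i. f i j * (if i \<le> a then pow3 W j (a-i) b c else 0))"
  by (simp add: subst3_lift2 mul3_pow3_varZ_left)

lemma subst3_lift2_varX:
  "subst3 (lift2 f) varX W zero3 a b c = subst3 (lift2 f) varZ (swap3 W) zero3 b a c"
proof -
  have "mul3 (pow3 varX i) (pow3 W j) = swap3 (mul3 (pow3 varZ i) (pow3 (swap3 W) j))" for i j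
    by (simp add: swap3_mul3 swap3_pow3 swap3_varZ swap3_swap3)
  then show ?thesis by (simp add: subst3_lift2 swap3_def add.commute add.left_commute)
qed

definition O_u :: "nat \<Rightarrow> ser3 \<Rightarrow> bool" where
  "O_u p A \<longleftrightarrow> (\<forall>a b c. c < p \<longrightarrow> A a b c = 0)"

definition O_u_chi0 :: "nat \<Rightarrow> ser3 \<Rightarrow> bool" where
  "O_u_chi0 p A \<longleftrightarrow> (\<forall>a c. c < p \<longrightarrow> A a 0 c = 0)"

lemma O_u_0 [simp]: "O_u 0 A"
  unfolding O_u_def by simp

lemma O_u_chi0_0 [simp]: "O_u_chi0 0 A"
  unfolding O_u_chi0_def by simp

lemma O_u_imp_O_u_chi0: "O_u p A \<Longrightarrow> O_u_chi0 p A"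
  unfolding O_u_def O_u_chi0_def by simp

lemma O_u_mul3:
  assumes "O_u p A" "O_u q B"
  shows "O_u (p + q) (mul3 A B)"
  unfolding O_u_def mul3_def
proof (intro allI impI sum.neutral ballI)
  fix a b c i j k
  assume "c < p + q" "k \<in> {..c}"
  then show "A i j k * B (a - i) (b - j) (c - k) = 0"
    using assms unfolding O_u_def by (cases "k < p") auto
qed

lemma O_u_pow3: "O_u p A \<Longrightarrow> O_u (n * p) (pow3 A n)"
  by (induction n) (simp_all add: O_u_mul3 one3_def)

lemma O_u_chi0_mul3:
  assumes "O_u_chi0 p A" "O_u_chi0 q B"
  shows "O_u_chi0 (p + q) (mul3 A B)"
  unfolding O_u_chi0_def mul3_def
proof (intro allI impI sum.neutral ballI)
  fix a c i j k
  assume "c < p + q" "k \<in> {..c}" "j \<in> {..0::nat}"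
  then show "A i j k * B (a - i) (0 - j) (c - k) = 0"
    using assms unfolding O_u_chi0_def by (cases "k < p") auto
qed

lemma O_u_chi0_pow3: "O_u_chi0 p A \<Longrightarrow> O_u_chi0 (n * p) (pow3 A n)"
  by (induction n) (simp_all add: O_u_chi0_mul3)

lemma mul3_coeff_leading_u:
  assumes "O_u p A" "O_u q B"
  shows "mul3 A B a b (p + q) = (\<Sum>i\<le>a. \<Sum>j\<le>b. A i j p * B (a-i) (b-j) q)"
  unfolding mul3_def
proof (intro sum.cong refl)
  fix i j
  show "(\<Sum>k\<le>p+q. A i j k * B (a-i) (b-j) (p+q-k)) = A i j p * B (a-i) (b-j) q"
  proof (subst sum_atMost_single[where kk = p])
    fix k
    assume "k \<le> p + q" "k \<noteq> p"
    then show "A i j k * B (a-i) (b-j) (p+q-k) = 0"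
      using assms unfolding O_u_def by (cases "k < p") auto
  qed simp_all
qed

lemma pow3_coeff_leading_u:
  assumes "O_u 1 C"
  shows "pow3 C n 0 0 n = C 0 0 1 ^ n"
proof (induction n)
  case 0
  then show ?case by (simp add: one3_def)
next
  case (Suc n)
  have "pow3 C (Suc n) 0 0 (1 + n) = C 0 0 1 * pow3 C n 0 0 n"
    using mul3_coeff_leading_u[OF assms O_u_pow3[OF assms, of n]] by simp
  then show ?case using Suc by simp
qed

lemma mul3_coeff_11_leading_u:
  assumes "O_u 1 C" "A 0 0 0 = 0" "A 0 1 0 = 0" "B 0 0 0 = 0"
  shows "mul3 A (mul3 B (pow3 C n)) 1 1 n = A 1 0 0 * B 0 1 0 * C 0 0 1 ^ n"
proof -
  have Cn: "O_u n (pow3 C n)"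
    using O_u_pow3[OF assms(1), of n] by simp
  have BCn: "mul3 B (pow3 C n) a b n = (\<Sum>i\<le>a. \<Sum>j\<le>b. B i j 0 * pow3 C n (a-i) (b-j) n)"
    for a b using mul3_coeff_leading_u[OF O_u_0 Cn] by simp
  have "mul3 A (mul3 B (pow3 C n)) 1 1 n =
      (\<Sum>i\<le>1. \<Sum>j\<le>1. A i j 0 * mul3 B (pow3 C n) (1-i) (1-j) n)"
    using mul3_coeff_leading_u[OF O_u_0 O_u_mul3[OF O_u_0 Cn]] by simp
  also have "\<dots> = A 1 0 0 * B 0 1 0 * pow3 C n 0 0 n"
    using assms(2-4) by (simp add: BCn)
  finally show ?thesis
    by (simp add: pow3_coeff_leading_u[OF assms(1)])
qed

lemma pow3_coeff_z0:
  assumes W: "\<And>b c. W 0 b c = (if b = 0 \<and> c = 1 then 1 else 0)"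
  shows "pow3 W j 0 b c = (if b = 0 \<and> c = j then 1 else 0)"
proof (induction j arbitrary: b c)
  case 0
  then show ?case by (auto simp: one3_def)
next
  case (Suc j)
  have "pow3 W (Suc j) 0 b c = (\<Sum>j'\<le>b. \<Sum>k\<le>c. W 0 j' k * pow3 W j 0 (b-j') (c-k))"
    by (simp add: mul3_def)
  also have "\<dots> = (\<Sum>j'\<le>b. \<Sum>k\<le>c. if j' = 0 \<and> k = 1 then pow3 W j 0 (b-j') (c-k) else 0)"
    by (intro sum.cong refl) (simp add: W)
  also have "\<dots> = (if 1 \<le> c then pow3 W j 0 b (c-1) else 0)"
    by (simp only: sum_atMost_delta2) simp
  finally show ?case using Suc by auto
qed

lemma pow3_coeff_chi0:
  assumes "\<And>a c. W a 0 c = (if a = 0 \<and> c = 1 then 1 else 0)"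
  shows "pow3 W j a 0 c = (if a = 0 \<and> c = j then 1 else 0)"
proof -
  have "pow3 (swap3 W) j 0 a c = (if a = 0 \<and> c = j then 1 else 0)"
    by (rule pow3_coeff_z0) (simp add: swap3_def assms)
  then show ?thesis by (simp only: swap3_pow3[symmetric]) (simp add: swap3_def)
qed

lemma pow3_coeff_11:
  assumes W0b: "\<And>b c. W 0 b c = (if b = 0 \<and> c = 1 then 1 else 0)"
    and Wa0: "\<And>a c. W a 0 c = (if a = 0 \<and> c = 1 then 1 else 0)"
    and W11: "\<And>c. W 1 1 c = (if c = m then e else 0)"
    and "m \<ge> 1"
  shows "pow3 W j 1 1 c = (if 1 \<le> j \<and> c = m + j - 1 then of_nat j * e else 0)"
proof (induction j arbitrary: c)
  case 0
  then show ?case by (auto simp: one3_def)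
next
  case (Suc j)
  have "pow3 W (Suc j) 1 1 c = (\<Sum>k\<le>c. W 0 0 k * pow3 W j 1 1 (c-k) + W 0 1 k * pow3 W j 1 0 (c-k)
      + W 1 0 k * pow3 W j 0 1 (c-k) + W 1 1 k * pow3 W j 0 0 (c-k))"
    by (simp add: mul3_def atMost_Suc sum.distrib)
  also have "\<dots> = (\<Sum>k\<le>c. (if k = 1 then pow3 W j 1 1 (c-1) else 0)
       + (if k = m then e * pow3 W j 0 0 (c-m) else 0))"
    using W11[unfolded One_nat_def] by (intro sum.cong refl) (simp add: W0b Wa0)
  also have "\<dots> = (if 1 \<le> c then pow3 W j 1 1 (c-1) else 0)
       + (if m \<le> c then e * pow3 W j 0 0 (c-m) else 0)"
    by (simp add: sum.distrib)
  also have "\<dots> = (if 1 \<le> Suc j \<and> c = m + Suc j - 1 then of_nat (Suc j) * e else 0)"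
    using \<open>m \<ge> 1\<close> Suc.IH[unfolded One_nat_def]
    by (auto simp: pow3_coeff_z0[where W = W, OF W0b] algebra_simps)
  finally show ?case .
qed

lemma subst3_lift2_varZ_coeff_chi0:
  assumes "\<And>a c. W a 0 c = (if a = 0 \<and> c = 1 then 1 else 0)"
  shows "subst3 (lift2 f) varZ W zero3 a 0 c = f a c"
proof -
  have "subst3 (lift2 f) varZ W zero3 a 0 c =
      (\<Sum>i\<le>a+0+c. \<Sum>j\<le>a+0+c-i. if i = a \<and> j = c then f a c else 0)"
    unfolding subst3_lift2_varZ by (intro sum.cong refl) (auto simp: pow3_coeff_chi0[where W = W, OF assms])
  then show ?thesis by (simp only: sum_simplex_delta2) simp
qed

lemma subst3_lift2_varZ_coeff_z0:
  assumes "\<And>b c. W 0 b c = (if b = 0 \<and> c = 1 then 1 else 0)"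
  shows "subst3 (lift2 f) varZ W zero3 0 b c = (if b = 0 then f 0 c else 0)"
proof -
  have "subst3 (lift2 f) varZ W zero3 0 b c =
      (\<Sum>i\<le>0+b+c. \<Sum>j\<le>0+b+c-i. if i = 0 \<and> j = c then (if b = 0 then f 0 c else 0) else 0)"
    unfolding subst3_lift2_varZ by (intro sum.cong refl) (auto simp: pow3_coeff_z0[where W = W, OF assms])
  then show ?thesis by (simp only: sum_simplex_delta2) simp
qed

lemma subst3_lift2_varZ_coeff_u0:
  assumes "O_u 1 W"
  shows "subst3 (lift2 f) varZ W zero3 a b 0 = (if b = 0 then f a 0 else 0)"
proof -
  have Wj: "pow3 W j x y 0 = (if j = 0 \<and> x = 0 \<and> y = 0 then 1 else 0)" for j x y
    using O_u_pow3[OF assms, of j] by (cases "j = 0") (auto simp: one3_def O_u_def)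
  have "subst3 (lift2 f) varZ W zero3 a b 0 =
      (\<Sum>i\<le>a+b+0. \<Sum>j\<le>a+b+0-i. if i = a \<and> j = 0 then (if b = 0 then f a 0 else 0) else 0)"
    unfolding subst3_lift2_varZ by (intro sum.cong refl) (auto simp: Wj one3_def)
  then show ?thesis by (simp only: sum_simplex_delta2) simp
qed

lemma subst3_lift2_varZ_coeff_11:
  assumes W0b: "\<And>b c. W 0 b c = (if b = 0 \<and> c = 1 then 1 else 0)"
    and Wa0: "\<And>a c. W a 0 c = (if a = 0 \<and> c = 1 then 1 else 0)"
    and W11: "\<And>c. W 1 1 c = (if c = m then e else 0)"
    and "m \<ge> 1"
  shows "subst3 (lift2 f) varZ W zero3 1 1 m = f 0 1 * e"
proof -
  have "f i j * (if i \<le> 1 then pow3 W j (1 - i) 1 m else 0) =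
      (if i = 0 \<and> j = 1 then f 0 1 * e else 0)" for i j
    using pow3_coeff_11[where W = W, OF W0b Wa0 W11 \<open>m \<ge> 1\<close>, of j m] \<open>m \<ge> 1\<close>
    by (cases "i = 0") (auto simp: pow3_coeff_z0[where W = W, OF W0b])
  then have "subst3 (lift2 f) varZ W zero3 1 1 m =
      (\<Sum>i\<le>1+1+m. \<Sum>j\<le>1+1+m-i. if i = 0 \<and> j = 1 then f 0 1 * e else 0)"
    unfolding subst3_lift2_varZ by (intro sum.cong refl) presburger
  then show ?thesis by (simp only: sum_simplex_delta2) simp
qed

lemma subst3_coeff_chi0_eq_0:
  assumes "O_u_chi0 1 B" "O_u_chi0 r C" "c < 1 + m * r"
    and P: "\<And>i j k. P i j k \<noteq> 0 \<Longrightarrow> 1 \<le> j \<and> m \<le> k"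
  shows "subst3 P A B C a 0 c = 0"
  unfolding subst3_def
proof (intro sum.neutral ballI)
  fix i j k
  show "P i j k * mul3 (pow3 A i) (mul3 (pow3 B j) (pow3 C k)) a 0 c = 0"
  proof (cases "P i j k = 0")
    case False
    then have "1 \<le> j" "m \<le> k" using P by auto
    then have "c < 0 + (j * 1 + k * r)"
      using \<open>c < 1 + m * r\<close> mult_right_mono[of m k r] by linarith
    moreover have "O_u_chi0 (0 + (j * 1 + k * r)) (mul3 (pow3 A i) (mul3 (pow3 B j) (pow3 C k)))"
      using assms(1,2) by (intro O_u_chi0_mul3 O_u_chi0_pow3 O_u_chi0_0)
    ultimately show ?thesis unfolding O_u_chi0_def by simp
  qed simp
qed

lemma hyp_phi_nonzero_coeff:
  "hyp_phi m eps h i j k \<noteq> 0 \<Longrightarrow> (i = 1 \<and> j = 1 \<and> k = m) \<or> (2 \<le> i \<and> 2 \<le> j \<and> m \<le> k)"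
  unfolding hyp_phi_def by (auto split: if_splits)

lemma subst3_hyp_phi_coeff_11:
  "subst3 (hyp_phi m eps h) A B C 1 1 m =
     complex_of_real eps / 2 * mul3 A (mul3 B (pow3 C m)) 1 1 m"
proof -
  have "hyp_phi m eps h i j k * mul3 (pow3 A i) (mul3 (pow3 B j) (pow3 C k)) 1 1 m =
      (if i = 1 \<and> j = 1 \<and> k = m
       then complex_of_real eps / 2 * mul3 A (mul3 B (pow3 C m)) 1 1 m else 0)"
    if "i + j + k \<le> m + 2" for i j k
  proof (cases "i = 1 \<and> j = 1 \<and> k = m")
    case True
    then show ?thesis by (simp add: hyp_phi_def mul3_one3_right)
  next
    case False
    with that have "hyp_phi m eps h i j k = 0"
      using hyp_phi_nonzero_coeff[of m eps h i j k] by fastforce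
    with False show ?thesis by (simp only: mult_zero_left if_False)
  qed
  then have "subst3 (hyp_phi m eps h) A B C 1 1 m =
      (\<Sum>i\<le>1+1+m. \<Sum>j\<le>1+1+m-i. \<Sum>k\<le>1+1+m-i-j. if i = 1 \<and> j = 1 \<and> k = m
        then complex_of_real eps / 2 * mul3 A (mul3 B (pow3 C m)) 1 1 m else 0)"
    unfolding subst3_def by (intro sum.cong refl) auto
  then show ?thesis by (simp only: sum_simplex_delta3) simp
qed

lemma dw2_funpow: "(dw2 ^^ l) f i j = pochhammer (of_nat (Suc j)) l * f i (j + l)"
proof (induction l arbitrary: j)
  case 0
  then show ?case by simp
next
  case (Suc l)
  have "(dw2 ^^ Suc l) f i j = of_nat (Suc j) * (dw2 ^^ l) f i (Suc j)"
    by (simp add: dw2_def)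
  then show ?case by (simp add: Suc pochhammer_rec algebra_simps)
qed

lemma powi_eq_of_fixed_point:
  fixes x c :: "'a::field"
  assumes "x \<noteq> 0" "m \<ge> 1" "x = c * x ^ m"
  shows "x powi (1 - int m) = c"
proof -
  obtain k where m: "m = Suc k" using \<open>m \<ge> 1\<close> by (cases m) auto
  have "x * 1 = x * (c * x ^ k)"
    using assms(3) by (simp add: m algebra_simps)
  then have "c * x ^ k = 1" using \<open>x \<noteq> 0\<close> by simp
  then show ?thesis
    using \<open>x \<noteq> 0\<close> by (simp add: m power_int_minus field_simps)
qed

section \<open>The mapping identity on the hypersurface\<close>

locale hypersurface_map =
  fixes m :: nat and eps :: real and h h' :: "nat \<Rightarrow> nat \<Rightarrow> nat \<Rightarrow> complex" and F G :: ser2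
  assumes m_ge_1: "m \<ge> 1"
    and eps_nonzero: "eps \<noteq> 0"
    and F_00: "F 0 0 = 0"
    and G_00: "G 0 0 = 0"
    and maps_into: "maps_into (hyp_phi m eps h) (hyp_phi m eps h') F G"
begin

text \<open>\<open>X_M\<close> is \<open>X\<close> restricted to \<open>M\<close>, as a series in \<open>(z, \<chi>, u)\<close>; these are the local
  definitions in \<open>maps_into\<close>.\<close>

definition w_M :: ser3 where
  "w_M = (\<lambda>a b c. varU a b c + \<i> * hyp_phi m eps h a b c)"

definition wbar_M :: ser3 where
  "wbar_M = (\<lambda>a b c. varU a b c - \<i> * hyp_phi m eps h a b c)"

definition F_M :: ser3 where
  "F_M = subst3 (lift2 F) varZ w_M zero3"

definition Fbar_M :: ser3 where
  "Fbar_M = subst3 (lift2 (cnj2 F)) varX wbar_M zero3"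

definition G_M :: ser3 where
  "G_M = subst3 (lift2 G) varZ w_M zero3"

definition Gbar_M :: ser3 where
  "Gbar_M = subst3 (lift2 (cnj2 G)) varX wbar_M zero3"

definition ReG_M :: ser3 where
  "ReG_M = (\<lambda>a b c. (G_M a b c + Gbar_M a b c) / 2)"

lemma mapping_identity:
  "G_M a b c - Gbar_M a b c = 2 * \<i> * subst3 (hyp_phi m eps h') F_M Fbar_M ReG_M a b c"
  using maps_into unfolding maps_into_def Let_def w_M_def wbar_M_def F_M_def Fbar_M_def
    G_M_def Gbar_M_def ReG_M_def by blast

lemma w_M_coeffs:
  "w_M 0 b c = (if b = 0 \<and> c = 1 then 1 else 0)"
  "w_M a 0 c = (if a = 0 \<and> c = 1 then 1 else 0)"
  "w_M 1 1 c = (if c = m then \<i> * eps / 2 else 0)"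
  "O_u 1 w_M"
  using m_ge_1 unfolding w_M_def varU_def hyp_phi_def O_u_def by simp_all

lemma swap3_wbar_M_coeffs:
  "swap3 wbar_M 0 b c = (if b = 0 \<and> c = 1 then 1 else 0)"
  "swap3 wbar_M a 0 c = (if a = 0 \<and> c = 1 then 1 else 0)"
  "swap3 wbar_M 1 1 c = (if c = m then - (\<i> * eps / 2) else 0)"
  "O_u 1 (swap3 wbar_M)"
  using m_ge_1 unfolding swap3_def wbar_M_def varU_def hyp_phi_def O_u_def by simp_all

lemma F_M_coeff_chi0: "F_M a 0 c = F a c"
  unfolding F_M_def by (rule subst3_lift2_varZ_coeff_chi0) (rule w_M_coeffs)

lemma F_M_coeff_z0: "F_M 0 b c = (if b = 0 then F 0 c else 0)"
  unfolding F_M_def by (rule subst3_lift2_varZ_coeff_z0) (rule w_M_coeffs)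

lemma Fbar_M_coeff_chi0: "Fbar_M a 0 c = (if a = 0 then cnj (F 0 c) else 0)"
  unfolding Fbar_M_def subst3_lift2_varX
    subst3_lift2_varZ_coeff_z0[where W = "swap3 wbar_M", OF swap3_wbar_M_coeffs(1)]
  by (simp add: cnj2_def)

lemma Fbar_M_coeff_z0: "Fbar_M 0 b c = cnj (F b c)"
  unfolding Fbar_M_def subst3_lift2_varX
    subst3_lift2_varZ_coeff_chi0[where W = "swap3 wbar_M", OF swap3_wbar_M_coeffs(2)]
  by (simp add: cnj2_def)

lemma G_M_coeff_chi0: "G_M a 0 c = G a c"
  unfolding G_M_def by (rule subst3_lift2_varZ_coeff_chi0) (rule w_M_coeffs)

lemma Gbar_M_coeff_chi0: "Gbar_M a 0 c = (if a = 0 then cnj (G 0 c) else 0)"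
  unfolding Gbar_M_def subst3_lift2_varX
    subst3_lift2_varZ_coeff_z0[where W = "swap3 wbar_M", OF swap3_wbar_M_coeffs(1)]
  by (simp add: cnj2_def)

lemma G_M_coeff_u0: "G_M a b 0 = (if b = 0 then G a 0 else 0)"
  unfolding G_M_def by (rule subst3_lift2_varZ_coeff_u0) (rule w_M_coeffs)

lemma Gbar_M_coeff_u0: "Gbar_M a b 0 = (if a = 0 then cnj (G b 0) else 0)"
  unfolding Gbar_M_def subst3_lift2_varX
    subst3_lift2_varZ_coeff_u0[where W = "swap3 wbar_M", OF swap3_wbar_M_coeffs(4)]
  by (simp add: cnj2_def)

lemma G_M_coeff_11: "G_M 1 1 m = G 0 1 * (\<i> * eps / 2)"
  unfolding G_M_def by (rule subst3_lift2_varZ_coeff_11[OF w_M_coeffs(1-3) m_ge_1])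

lemma Gbar_M_coeff_11: "Gbar_M 1 1 m = - cnj (G 0 1) * (\<i> * eps / 2)"
  unfolding Gbar_M_def subst3_lift2_varX
    subst3_lift2_varZ_coeff_11[where W = "swap3 wbar_M", OF swap3_wbar_M_coeffs(1-3) m_ge_1]
  by (simp add: cnj2_def)

lemma G_coeff_from_chi0:
  assumes "O_u_chi0 r ReG_M" "c < 1 + m * r"
  shows "G a c = (if a = 0 then cnj (G 0 c) else 0)"
proof -
  have "O_u_chi0 1 Fbar_M"
    unfolding O_u_chi0_def by (simp add: Fbar_M_coeff_chi0 F_00)
  moreover have "hyp_phi m eps h' i j k \<noteq> 0 \<Longrightarrow> 1 \<le> j \<and> m \<le> k" for i j k
    using hyp_phi_nonzero_coeff by fastforce
  ultimately have "subst3 (hyp_phi m eps h') F_M Fbar_M ReG_M a 0 c = 0"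
    using assms by (intro subst3_coeff_chi0_eq_0)
  then show ?thesis
    using mapping_identity[of a 0 c] by (simp add: G_M_coeff_chi0 Gbar_M_coeff_chi0)
qed

lemma G_coeff_w0: "G a 0 = 0"
  using G_coeff_from_chi0[of 0 0 a] by (simp add: G_00)

lemma ReG_M_O_u: "O_u 1 ReG_M"
  unfolding O_u_def ReG_M_def by (simp add: G_M_coeff_u0 Gbar_M_coeff_u0 G_coeff_w0)

lemma G_coeff_le_m: "c \<le> m \<Longrightarrow> G a c = (if a = 0 then cnj (G 0 c) else 0)"
  by (rule G_coeff_from_chi0[OF O_u_imp_O_u_chi0[OF ReG_M_O_u]]) simp

lemma G_coeff_0_real: "c \<le> m \<Longrightarrow> G 0 c \<in> \<real>"
  using G_coeff_le_m[of c 0] by (simp add: Reals_cnj_iff)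

lemma Re_G01_fixed_point: "Re (G 0 1) = (cmod (F 1 0))\<^sup>2 * Re (G 0 1) ^ m"
proof -
  define mu where "mu = Re (G 0 1)"
  have "G_M 1 1 m - Gbar_M 1 1 m = (G 0 1 + cnj (G 0 1)) * (\<i> * eps / 2)"
    unfolding G_M_coeff_11 Gbar_M_coeff_11 by (simp add: algebra_simps)
  also have "\<dots> = \<i> * eps * mu"
    by (simp add: complex_add_cnj mu_def)
  finally have lhs: "G_M 1 1 m - Gbar_M 1 1 m = \<i> * eps * mu" .
  have "ReG_M 0 0 1 = mu"
    by (simp add: ReG_M_def G_M_coeff_chi0 Gbar_M_coeff_chi0 complex_add_cnj mu_def)
  then have "mul3 F_M (mul3 Fbar_M (pow3 ReG_M m)) 1 1 m = F 1 0 * cnj (F 1 0) * mu ^ m"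
    using mul3_coeff_11_leading_u[OF ReG_M_O_u, of F_M Fbar_M m]
    by (simp add: F_M_coeff_chi0 F_M_coeff_z0 Fbar_M_coeff_chi0 Fbar_M_coeff_z0 F_00)
  then have rhs: "subst3 (hyp_phi m eps h') F_M Fbar_M ReG_M 1 1 m =
      eps / 2 * (F 1 0 * cnj (F 1 0) * mu ^ m)"
    unfolding subst3_hyp_phi_coeff_11 by simp
  have "\<i> * eps * mu = 2 * \<i> * (eps / 2 * (F 1 0 * cnj (F 1 0) * mu ^ m))"
    using mapping_identity[of 1 1 m] unfolding lhs rhs .
  then have "complex_of_real (eps * mu) = complex_of_real (eps * ((cmod (F 1 0))\<^sup>2 * mu ^ m))"
    unfolding complex_norm_square[symmetric] by simp
  then show ?thesis
    using eps_nonzero unfolding mu_def of_real_eq_iff by simp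
qed

lemma dw2_funpow_G_real: "l \<le> m \<Longrightarrow> (dw2 ^^ l) G 0 0 \<in> \<real>"
  using G_coeff_0_real[of l] unfolding dw2_funpow pochhammer_of_nat by simp

end

theorem lemma3p1:
  fixes m :: nat and eps :: real
    and h h' :: "nat \<Rightarrow> nat \<Rightarrow> nat \<Rightarrow> complex"
    and F G :: ser2
  assumes "m \<ge> 1"
    and "eps = 1 \<or> eps = -1"
    and "real_hyp_data h" and "real_hyp_data h'"
    and "F 0 0 = 0" and "G 0 0 = 0"
    and "F 1 0 * G 0 1 - F 0 1 * G 1 0 \<noteq> 0"
    and "maps_into (hyp_phi m eps h) (hyp_phi m eps h') F G"
  shows "\<exists>lam mu. lam \<noteq> 0 \<and> dz2 F 0 0 = lam \<and> dw2 G 0 0 = complex_of_real mu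
            \<and> mu powi (1 - int m) = (cmod lam)^2
            \<and> O_w 1 G \<and> O_w (m + 1) (dz2 G)
            \<and> (\<forall>l \<le> m. (dw2 ^^ l) G 0 0 \<in> \<real>)"
proof -
  interpret hypersurface_map m eps h h' F G
    using assms(1,2,5,6,8) by unfold_locales auto
  define lam where "lam = F 1 0"
  define mu where "mu = Re (G 0 1)"
  have G01: "G 0 1 = complex_of_real mu"
    using G_coeff_0_real[of 1] m_ge_1 by (simp add: mu_def)
  have "lam \<noteq> 0" "mu \<noteq> 0"
    using assms(7) G01 G_coeff_w0[of 1] by (auto simp: lam_def)
  then have "mu powi (1 - int m) = (cmod lam)\<^sup>2"
    using Re_G01_fixed_point m_ge_1 by (intro powi_eq_of_fixed_point) (simp_all add: lam_def mu_def)
  moreover have "O_w 1 G" "O_w (m + 1) (dz2 G)"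
    unfolding O_w_def dz2_def using G_coeff_w0 G_coeff_le_m by simp_all
  ultimately show ?thesis
    using \<open>lam \<noteq> 0\<close> G01 dw2_funpow_G_real
    by (intro exI[of _ lam] exI[of _ mu]) (simp add: dz2_def dw2_def lam_def)
qed

end
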